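(* Let $\mathcal{U}_{w,F}$ be a folded ribbon $3$-stick unknot with ribbon linking number $\operatorname{Lk}(\mathcal{U}_{w,F})=\pm1$, and assume $\operatorname{Len}(\mathcal{U})=1$. Then the ribbon width satisfies $w\le \frac{1}{\sqrt3}$, and the width achieves its maximum value $\frac1{\sqrt3}$ when $\mathcal{U}$ is an equilateral triangle.
   Context: A folded ribbon $3$-stick unknot corresponds to an unknot diagram $\mathcal{U}$ with three edges forming a non-degenerate triangle. For width $w>0$, $\mathcal{U}_{w,F}$ is a flat strip of width $w$ centred on $\mathcal{U}$ (boundary parallel to and at distance $w/2$ from each edge), folded at each vertex along a fold line through the vertex perpendicular to the bisector of the angle there; it is a piecewise-linear immersion of a Möbius band into the plane whose only singularities are the pairwise disjoint fold lines (this constrains how large $w$ can be for a given triangle); the folding information $F$ records which layer lies on top at each fold. The ribbon linking number $\operatorname{Lk}(\mathcal{U}_{w,F})$ is one half the sum of the signs (right-hand rule) of the crossings between the oriented diagram and the ribbon's boundary curve. Linking number $\pm1$ corresponds to one of the three folds being of a different over/under type from the other two. *)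

theory Defs
  imports "HOL-Analysis.Analysis"
begin

text \<open>A 3-stick unknot diagram: vertices P 0, P 1, P 2 of a triangle in the plane
  (indices read modulo 3); edge i runs from vertex i to vertex i+1.\<close>

type_synonym point = "real^2"

definition vtx :: "(nat \<Rightarrow> point) \<Rightarrow> nat \<Rightarrow> point" where
  "vtx P i = P (i mod 3)"

definition nondegenerate_triangle :: "(nat \<Rightarrow> point) \<Rightarrow> bool" where
  "nondegenerate_triangle P \<longleftrightarrow> \<not> collinear {P 0, P 1, P 2}"

definition Len :: "(nat \<Rightarrow> point) \<Rightarrow> real" where
  "Len P = dist (P 0) (P 1) + dist (P 1) (P 2) + dist (P 2) (P 0)"

definition equilateral :: "(nat \<Rightarrow> point) \<Rightarrow> bool" where
  "equilateral P \<longleftrightarrow> dist (P 0) (P 1) = dist (P 1) (P 2) \<and> dist (P 1) (P 2) = dist (P 2) (P 0)"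

definition bisector_dir :: "(nat \<Rightarrow> point) \<Rightarrow> nat \<Rightarrow> point" where
  "bisector_dir P i = sgn (vtx P (i + 2) - vtx P i) + sgn (vtx P (i + 1) - vtx P i)"

definition fold_line :: "(nat \<Rightarrow> point) \<Rightarrow> nat \<Rightarrow> point set" where
  "fold_line P i = {x. inner (x - vtx P i) (bisector_dir P i) = 0}"

text \<open>The part of the fold line at vertex i lying in the (interior of the) ribbon of width w:
  points of the fold line at distance less than w/2 from the line of the incoming edge
  (equivalently, of the outgoing edge).\<close>
definition fold_segment :: "(nat \<Rightarrow> point) \<Rightarrow> real \<Rightarrow> nat \<Rightarrow> point set" where
  "fold_segment P w i =
     fold_line P i \<inter> {x. infdist x (affine hull {vtx P (i + 2), vtx P i}) < w / 2}"

text \<open>Folding information F: F i says which layer lies on top at the fold at vertex i.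
  Each fold contributes +1 or -1 to the ribbon linking number according to its type
  (the two crossings at a fold each contribute half of that, after the factor 1/2).\<close>
definition ribbon_Lk :: "(nat \<Rightarrow> bool) \<Rightarrow> int" where
  "ribbon_Lk F = (\<Sum>i<3. if F i then 1 else -1)"

definition folded_ribbon_3stick :: "(nat \<Rightarrow> point) \<Rightarrow> real \<Rightarrow> (nat \<Rightarrow> bool) \<Rightarrow> bool" where
  "folded_ribbon_3stick P w F \<longleftrightarrow>
     nondegenerate_triangle P \<and> w > 0 \<and>
     (\<forall>i<3. \<forall>j<3. i \<noteq> j \<longrightarrow> fold_segment P w i \<inter> fold_segment P w j = {})"

end

theory Submission
  imports Defs
begin

text \<open>The fold line at a vertex is the external bisector of the angle there, so the
  fold lines at two vertices meet exactly in the excenter opposite the third vertex, and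
  every other common point of the two fold lines lies farther from the edge joining the two
  vertices. Hence the fold segments of half-width w/2 are pairwise disjoint iff w/2 is at
  most every exradius. The smallest exradius is the one opposite the shortest side, and by
  Heron's formula it is at most Len/(2 sqrt 3), with equality for the equilateral triangle.
  The folding information, and with it the linking number, does not enter this disjointness
  condition.\<close>

lemma dist_line_point_sq:
  fixes X A u :: "'a::real_inner"
  assumes "u \<noteq> 0"
  shows "(dist X (A + t *\<^sub>R u))\<^sup>2 =
           (norm (X - A))\<^sup>2 - (inner (X - A) u)\<^sup>2 / (norm u)\<^sup>2
           + (norm u)\<^sup>2 * (t - inner (X - A) u / (norm u)\<^sup>2)\<^sup>2"
proof -
  have expand:
    "(norm (z - t *\<^sub>R u))\<^sup>2 = (norm z)\<^sup>2 - 2 * t * inner z u + t\<^sup>2 * (norm u)\<^sup>2" for z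
    by (simp only: power2_norm_eq_inner)
      (simp add: inner_diff_left inner_diff_right inner_commute power2_eq_square)
  have "X - (A + t *\<^sub>R u) = (X - A) - t *\<^sub>R u" by (simp add: algebra_simps)
  then have "(dist X (A + t *\<^sub>R u))\<^sup>2 =
      (norm (X - A))\<^sup>2 - 2 * t * inner (X - A) u + t\<^sup>2 * (norm u)\<^sup>2"
    by (simp only: dist_norm expand)
  moreover have "(norm u)\<^sup>2 \<noteq> 0" using assms by simp
  ultimately show ?thesis
    by (simp add: power2_eq_square divide_simps) (simp add: algebra_simps)
qed

lemma infdist_affine_hull_2_sq:
  fixes X A B :: "'a::real_inner"
  assumes "A \<noteq> B"
  shows "(infdist X (affine hull {A, B}))\<^sup>2 =
           (norm (X - A))\<^sup>2 - (inner (X - A) (B - A))\<^sup>2 / (norm (B - A))\<^sup>2"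
proof -
  define foot where "foot = A + (inner (X - A) (B - A) / (norm (B - A))\<^sup>2) *\<^sub>R (B - A)"
  have u: "B - A \<noteq> 0" using assms by simp
  have line: "affine hull {A, B} = range (\<lambda>t. A + t *\<^sub>R (B - A))"
    by (rule affine_hull_2_alt)
  have foot_in: "foot \<in> affine hull {A, B}" unfolding line foot_def by (rule rangeI)
  have foot_dist: "(dist X foot)\<^sup>2 = (norm (X - A))\<^sup>2 - (inner (X - A) (B - A))\<^sup>2 / (norm (B - A))\<^sup>2"
    unfolding foot_def dist_line_point_sq[OF u] by simp
  have closest: "dist X foot \<le> dist X y" if "y \<in> affine hull {A, B}" for y
  proof -
    from that obtain t where y: "y = A + t *\<^sub>R (B - A)" unfolding line by blast
    have "(dist X y)\<^sup>2 = (dist X foot)\<^sup>2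
        + (norm (B - A))\<^sup>2 * (t - inner (X - A) (B - A) / (norm (B - A))\<^sup>2)\<^sup>2"
      unfolding y dist_line_point_sq[OF u] foot_dist ..
    moreover have "0 \<le> (norm (B - A))\<^sup>2 * (t - inner (X - A) (B - A) / (norm (B - A))\<^sup>2)\<^sup>2"
      by simp
    ultimately have "(dist X foot)\<^sup>2 \<le> (dist X y)\<^sup>2" by linarith
    then show ?thesis by (rule power2_le_imp_le) simp
  qed
  have "infdist X (affine hull {A, B}) = dist X foot"
  proof (rule antisym)
    show "infdist X (affine hull {A, B}) \<le> dist X foot" by (rule infdist_le[OF foot_in])
    show "dist X foot \<le> infdist X (affine hull {A, B})"
      using foot_in closest by (auto simp: infdist_notempty intro!: cINF_greatest)
  qed
  then show ?thesis using foot_dist by simp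
qed

lemma inner_law_of_cosines:
  fixes A B C :: "'a::real_inner"
  shows "inner (B - A) (C - A) = ((dist A B)\<^sup>2 + (dist C A)\<^sup>2 - (dist B C)\<^sup>2) / 2"
proof -
  have "C - B = (C - A) - (B - A)" by simp
  then have "(dist B C)\<^sup>2 = (norm (B - A))\<^sup>2 + (norm (C - A))\<^sup>2 - 2 * inner (B - A) (C - A)"
    by (simp only: dist_commute[of B] dist_norm power2_norm_eq_inner)
      (simp add: inner_diff_left inner_diff_right inner_commute)
  moreover have "dist A B = norm (B - A)" "dist C A = norm (C - A)"
    by (simp_all add: dist_norm norm_minus_commute)
  ultimately show ?thesis by simp
qed

definition external_bisector :: "'a::real_inner \<Rightarrow> 'a \<Rightarrow> 'a \<Rightarrow> 'a set" where
  "external_bisector A B C = {x. inner (x - A) (sgn (C - A) + sgn (B - A)) = 0}"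

text \<open>The excenter opposite C, and the radius of that excircle in terms of the side lengths
  a = BC, b = CA, c = AB (Heron: area / (s - c), s the semiperimeter).\<close>

definition excenter :: "'a::real_normed_vector \<Rightarrow> 'a \<Rightarrow> 'a \<Rightarrow> 'a" where
  "excenter A B C =
     (dist B C *\<^sub>R A + dist C A *\<^sub>R B - dist A B *\<^sub>R C) /\<^sub>R (dist B C + dist C A - dist A B)"

definition exradius :: "real \<Rightarrow> real \<Rightarrow> real \<Rightarrow> real" where
  "exradius a b c = sqrt ((a + b + c) * (b + c - a) * (c + a - b) / (4 * (a + b - c)))"

locale triangle =
  fixes A B C :: "'a::real_inner"
  assumes strict_triangle:
    "dist A B < dist B C + dist C A" "dist B C < dist C A + dist A B" "dist C A < dist A B + dist B C"
begin

lemma sides_pos: "0 < dist A B" "0 < dist B C" "0 < dist C A"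
  using strict_triangle by linarith+

lemma excenter_diff:
  "excenter A B C - A =
     (dist C A *\<^sub>R (B - A) - dist A B *\<^sub>R (C - A)) /\<^sub>R (dist B C + dist C A - dist A B)"
proof -
  define D where "D = dist B C + dist C A - dist A B"
  have D: "D \<noteq> 0" using strict_triangle by (simp add: D_def)
  have "excenter A B C - A =
      (1 / D) *\<^sub>R (dist B C *\<^sub>R A + dist C A *\<^sub>R B - dist A B *\<^sub>R C - D *\<^sub>R A)"
    using D by (simp add: excenter_def D_def scaleR_diff_right divide_inverse)
  also have "dist B C *\<^sub>R A + dist C A *\<^sub>R B - dist A B *\<^sub>R C - D *\<^sub>R A
      = dist C A *\<^sub>R (B - A) - dist A B *\<^sub>R (C - A)"
    by (simp add: D_def algebra_simps)
  finally show ?thesis by (simp add: D_def divide_inverse)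
qed

text \<open>t = s - b is the length of the tangents from A to the excircle.\<close>

lemma excenter_tangent_lengths:
  defines "t \<equiv> (dist A B + dist B C - dist C A) / 2"
  shows "inner (excenter A B C - A) (B - A) = dist A B * t"
    and "inner (excenter A B C - A) (C - A) = - dist C A * t"
    and "(norm (excenter A B C - A))\<^sup>2 = dist A B * dist C A * t / ((dist B C + dist C A - dist A B) / 2)"
proof -
  define a b c where "a = dist B C" and "b = dist C A" and "c = dist A B"
  define D where "D = a + b - c"
  define u v where "u = B - A" and "v = C - A"
  have D: "D > 0" using strict_triangle by (simp add: D_def a_def b_def c_def)
  have uu: "inner u u = c\<^sup>2" and vv: "inner v v = b\<^sup>2"
    by (simp_all add: u_def v_def c_def b_def dot_square_norm dist_norm norm_minus_commute)
  have uv: "inner u v = (c\<^sup>2 + b\<^sup>2 - a\<^sup>2) / 2"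
    unfolding u_def v_def a_def b_def c_def by (rule inner_law_of_cosines)
  have z: "excenter A B C - A = (1 / D) *\<^sub>R (b *\<^sub>R u - c *\<^sub>R v)"
    unfolding excenter_diff by (simp add: a_def b_def c_def D_def u_def v_def divide_inverse)
  have vu: "inner v u = inner u v" by (rule inner_commute)
  have zu: "inner (excenter A B C - A) u = (b * c\<^sup>2 - c * inner u v) / D"
    unfolding z using uu vu by (simp add: inner_diff_left divide_inverse)
  have zv: "inner (excenter A B C - A) v = (b * inner u v - c * b\<^sup>2) / D"
    unfolding z using vv by (simp add: inner_diff_left divide_inverse)
  have zz: "(norm (excenter A B C - A))\<^sup>2 =
      (b\<^sup>2 * c\<^sup>2 - 2 * b * c * inner u v + c\<^sup>2 * b\<^sup>2) / D\<^sup>2"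
    unfolding z power2_norm_eq_inner using uu vv vu
    by (simp add: inner_diff_left inner_diff_right power2_eq_square divide_inverse algebra_simps)
  show "inner (excenter A B C - A) (B - A) = dist A B * t"
    unfolding u_def[symmetric] zu uv t_def c_def[symmetric] a_def[symmetric] b_def[symmetric]
    using D by (simp add: D_def field_simps power2_eq_square)
  show "inner (excenter A B C - A) (C - A) = - dist C A * t"
    unfolding v_def[symmetric] zv uv t_def c_def[symmetric] a_def[symmetric] b_def[symmetric]
    using D by (simp add: D_def field_simps power2_eq_square)
  show "(norm (excenter A B C - A))\<^sup>2 = dist A B * dist C A * t / ((dist B C + dist C A - dist A B) / 2)"
  proof -
    have "b\<^sup>2 * c\<^sup>2 - 2 * b * c * inner u v + c\<^sup>2 * b\<^sup>2 = b * c * (c + a - b) * D"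
      unfolding uv D_def by (simp add: field_simps power2_eq_square)
    then have "(norm (excenter A B C - A))\<^sup>2 = b * c * (c + a - b) / D"
      unfolding zz using D by (simp add: power2_eq_square)
    then show ?thesis
      unfolding t_def c_def[symmetric] a_def[symmetric] b_def[symmetric] D_def[symmetric]
      by simp
  qed
qed

lemma excenter_in_external_bisector_A: "excenter A B C \<in> external_bisector A B C"
proof -
  have "sgn (C - A) + sgn (B - A) = (1 / dist C A) *\<^sub>R (C - A) + (1 / dist A B) *\<^sub>R (B - A)"
    by (simp add: sgn_div_norm dist_norm norm_minus_commute divide_inverse)
  then show ?thesis
    using sides_pos
    by (simp add: external_bisector_def inner_add_right excenter_tangent_lengths)
qed

lemma triangle_swap: "triangle B A C"
  using strict_triangle by unfold_locales (simp_all add: dist_commute add.commute)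

lemma excenter_in_external_bisector_B: "excenter A B C \<in> external_bisector B C A"
proof -
  have "excenter B A C = excenter A B C"
    by (simp add: excenter_def dist_commute add.commute)
  moreover have "external_bisector B A C = external_bisector B C A"
    by (simp add: external_bisector_def add.commute)
  ultimately show ?thesis
    using triangle.excenter_in_external_bisector_A[OF triangle_swap] by simp
qed

lemma infdist_excenter:
  "infdist (excenter A B C) (affine hull {A, B}) = exradius (dist B C) (dist C A) (dist A B)"
  "infdist (excenter A B C) (affine hull {C, A}) = exradius (dist B C) (dist C A) (dist A B)"
proof -
  define a b c where "a = dist B C" and "b = dist C A" and "c = dist A B"
  define t D where "t = (c + a - b) / 2" and "D = a + b - c"
  define R where "R = (a + b + c) * (b + c - a) * (c + a - b) / (4 * D)"
  have pos: "0 < b" "0 < c" "D \<noteq> 0"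
    using sides_pos strict_triangle by (simp_all add: a_def b_def c_def D_def)
  have nB: "norm (B - A) = c" and nC: "norm (C - A) = b"
    by (simp_all add: c_def b_def dist_norm norm_minus_commute)
  have "b * c * t / (D / 2) - t\<^sup>2 = t * (2 * b * c - t * D) / D"
    using pos by (simp add: field_simps power2_eq_square)
  also have "2 * b * c - t * D = (b + c - a) * (a + b + c) / 2"
    by (simp add: t_def D_def field_simps)
  also have "t * ((b + c - a) * (a + b + c) / 2) / D = R"
    by (simp add: t_def R_def)
  finally have "(norm (excenter A B C - A))\<^sup>2 - t\<^sup>2 = R"
    unfolding excenter_tangent_lengths(3)[folded a_def b_def c_def, folded t_def D_def]
    by (simp add: mult_ac)
  moreover have "A \<noteq> B" "A \<noteq> C" using pos by (auto simp: c_def b_def)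
  ultimately have "(infdist (excenter A B C) (affine hull {A, B}))\<^sup>2 = R"
    "(infdist (excenter A B C) (affine hull {A, C}))\<^sup>2 = R"
    using pos
    by (simp_all add: infdist_affine_hull_2_sq nB nC power_mult_distrib
        excenter_tangent_lengths(1,2)[folded a_def b_def c_def, folded t_def])
  then show
    "infdist (excenter A B C) (affine hull {A, B}) = exradius (dist B C) (dist C A) (dist A B)"
    "infdist (excenter A B C) (affine hull {C, A}) = exradius (dist B C) (dist C A) (dist A B)"
    unfolding exradius_def R_def D_def a_def b_def c_def insert_commute[of C A]
    by (metis real_sqrt_unique infdist_nonneg)+
qed

lemma orthogonal_external_bisectors:
  assumes "inner w (sgn (C - A) + sgn (B - A)) = 0" and "inner w (sgn (A - B) + sgn (C - B)) = 0"
  shows "inner w (B - A) = 0" and "inner w (C - A) = 0"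
proof -
  define a b c where "a = dist B C" and "b = dist C A" and "c = dist A B"
  define \<alpha> \<beta> where "\<alpha> = inner w (B - A)" and "\<beta> = inner w (C - A)"
  have pos: "0 < a" "0 < b" "0 < c" using sides_pos by (simp_all add: a_def b_def c_def)
  have dA: "sgn (C - A) + sgn (B - A) = (1 / b) *\<^sub>R (C - A) + (1 / c) *\<^sub>R (B - A)"
    by (simp add: sgn_div_norm b_def c_def dist_norm norm_minus_commute divide_inverse)
  have "A - B = - (B - A)" by simp
  then have dB: "sgn (A - B) + sgn (C - B) = (- 1 / c) *\<^sub>R (B - A) + (1 / a) *\<^sub>R ((C - A) - (B - A))"
    by (simp only: sgn_minus) (simp add: sgn_div_norm a_def c_def dist_norm norm_minus_commute divide_inverse)
  have "\<beta> / b + \<alpha> / c = 0"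
    using assms(1) unfolding dA inner_add_right inner_scaleR_right \<alpha>_def[symmetric] \<beta>_def[symmetric]
    by simp
  then have eqA: "c * \<beta> + b * \<alpha> = 0" using pos by (simp add: field_simps)
  have "- \<alpha> / c + (\<beta> - \<alpha>) / a = 0"
    using assms(2) unfolding dB inner_add_right inner_scaleR_right inner_diff_right[of w "C - A"]
      \<alpha>_def[symmetric] \<beta>_def[symmetric]
    by simp
  then have eqB: "c * (\<beta> - \<alpha>) - a * \<alpha> = 0" using pos by (simp add: field_simps)
  have "(a + b + c) * \<alpha> = 0" using eqA eqB by (simp add: algebra_simps)
  then have "\<alpha> = 0" using pos by simp
  then show "inner w (B - A) = 0" "inner w (C - A) = 0"
    using eqA pos by (simp_all add: \<alpha>_def \<beta>_def)
qed

lemma exradius_le_infdist: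
  assumes "X \<in> external_bisector A B C" and "X \<in> external_bisector B C A"
  shows "exradius (dist B C) (dist C A) (dist A B) \<le> infdist X (affine hull {A, B})"
proof -
  define E where "E = excenter A B C"
  define w z where "w = X - E" and "z = E - A"
  have "inner w (sgn (C - A) + sgn (B - A)) = 0"
    using assms(1) excenter_in_external_bisector_A
    by (simp add: external_bisector_def w_def E_def inner_diff_left)
  moreover have "inner w (sgn (A - B) + sgn (C - B)) = 0"
    using assms(2) excenter_in_external_bisector_B
    by (simp add: external_bisector_def w_def E_def inner_diff_left add.commute)
  ultimately have wB: "inner w (B - A) = 0" and wC: "inner w (C - A) = 0"
    by (rule orthogonal_external_bisectors)+
  have XA: "X - A = w + z" by (simp add: w_def z_def)
  have "orthogonal w z"
    unfolding orthogonal_def z_def E_def excenter_diff using wB wC by (simp add: inner_diff_right)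
  then have "(norm (X - A))\<^sup>2 = (norm w)\<^sup>2 + (norm z)\<^sup>2"
    unfolding XA by (rule norm_add_Pythagorean)
  moreover have "inner (X - A) (B - A) = inner z (B - A)"
    unfolding XA using wB by (simp add: inner_add_left)
  moreover have "A \<noteq> B" using sides_pos by auto
  ultimately have "(infdist X (affine hull {A, B}))\<^sup>2 = (norm w)\<^sup>2 + (infdist E (affine hull {A, B}))\<^sup>2"
    by (simp add: infdist_affine_hull_2_sq z_def)
  then have "(infdist E (affine hull {A, B}))\<^sup>2 \<le> (infdist X (affine hull {A, B}))\<^sup>2"
    by simp
  then show ?thesis
    unfolding E_def infdist_excenter by (rule power2_le_imp_le) (rule infdist_nonneg)
qed

lemma external_bisectors_meet_near_iff:
  "(\<exists>X \<in> external_bisector A B C \<inter> external_bisector B C A.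
      infdist X (affine hull {C, A}) < r \<and> infdist X (affine hull {A, B}) < r)
   \<longleftrightarrow> exradius (dist B C) (dist C A) (dist A B) < r"
proof
  assume "\<exists>X \<in> external_bisector A B C \<inter> external_bisector B C A.
      infdist X (affine hull {C, A}) < r \<and> infdist X (affine hull {A, B}) < r"
  then show "exradius (dist B C) (dist C A) (dist A B) < r"
    using exradius_le_infdist by fastforce
next
  assume "exradius (dist B C) (dist C A) (dist A B) < r"
  then show "\<exists>X \<in> external_bisector A B C \<inter> external_bisector B C A.
      infdist X (affine hull {C, A}) < r \<and> infdist X (affine hull {A, B}) < r"
    using excenter_in_external_bisector_A excenter_in_external_bisector_B infdist_excenter
    by (auto intro!: bexI[where x = "excenter A B C"])
qed

end

lemma exradius_le_perimeter:
  fixes a b c :: real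
  assumes "0 \<le> c" and "c \<le> a" and "c \<le> b" and "c < a + b"
  shows "exradius a b c \<le> (a + b + c) / (2 * sqrt 3)"
proof -
  define p where "p = a + b + c"
  have "(b + c - a) * (c + a - b) \<le> c\<^sup>2"
    using zero_le_power2[of "a - b"] by (simp add: power2_eq_square algebra_simps)
  moreover have "3 * c\<^sup>2 \<le> p * (a + b - c)"
  proof -
    have "0 \<le> (p - 3 * c) * (p + c)" using assms by (simp add: p_def)
    then show ?thesis by (simp add: p_def power2_eq_square algebra_simps)
  qed
  ultimately have "(b + c - a) * (c + a - b) * 3 \<le> p * (a + b - c)" by linarith
  then have "p * ((b + c - a) * (c + a - b) * 3) \<le> p * (p * (a + b - c))"
    using assms by (intro mult_left_mono) (simp_all add: p_def)
  then have "3 * (p * (b + c - a) * (c + a - b)) \<le> p\<^sup>2 * (a + b - c)"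
    by (simp add: power2_eq_square mult_ac)
  moreover have "p\<^sup>2 / 12 * (4 * (a + b - c)) = p\<^sup>2 * (a + b - c) / 3" by simp
  ultimately have "p * (b + c - a) * (c + a - b) \<le> p\<^sup>2 / 12 * (4 * (a + b - c))" by linarith
  moreover have "0 < 4 * (a + b - c)" using assms by simp
  ultimately have "p * (b + c - a) * (c + a - b) / (4 * (a + b - c)) \<le> p\<^sup>2 / 12"
    by (subst pos_divide_le_eq)
  then have "exradius a b c \<le> sqrt (p\<^sup>2 / 12)"
    unfolding exradius_def p_def by (rule real_sqrt_le_mono)
  also have "sqrt (p\<^sup>2 / 12) = p / (2 * sqrt 3)"
  proof -
    have "sqrt 12 = 2 * sqrt (3::real)"
      using real_sqrt_mult[of 4 3] by simp
    then show ?thesis using assms by (simp add: p_def real_sqrt_divide)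
  qed
  finally show ?thesis by (simp add: p_def)
qed

lemma exradius_equilateral:
  assumes "0 \<le> L"
  shows "exradius L L L = sqrt 3 / 2 * L"
proof (cases "L = 0")
  case False
  then have "(L + L + L) * (L + L - L) * (L + L - L) / (4 * (L + L - L)) = 3 / 4 * L\<^sup>2"
    by (simp add: power2_eq_square)
  then show ?thesis
    using assms by (simp add: exradius_def real_sqrt_mult real_sqrt_divide)
qed (simp add: exradius_def)

lemma triangle_iff_not_collinear:
  fixes A B C :: "'a::euclidean_space"
  shows "triangle A B C \<longleftrightarrow> \<not> collinear {A, B, C}"
proof -
  have "collinear {A, B, C} \<longleftrightarrow>
          dist B C = dist A B + dist C A \<or> dist C A = dist B C + dist A B \<or> dist A B = dist C A + dist B C"
    by (simp add: collinear_between_cases between dist_commute add.commute)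
  moreover have "dist A B \<le> dist B C + dist C A" "dist B C \<le> dist C A + dist A B"
      "dist C A \<le> dist A B + dist B C"
    by (metis dist_commute dist_triangle)+
  ultimately show ?thesis
    unfolding triangle_def by linarith
qed

definition edge_length :: "(nat \<Rightarrow> point) \<Rightarrow> nat \<Rightarrow> real" where
  "edge_length P i = dist (vtx P i) (vtx P (Suc i))"

lemma vtx_add_3: "vtx P (i + 3) = vtx P i"
  by (simp add: vtx_def)

lemma edge_length_vtx:
  "edge_length P i = dist (vtx P i) (vtx P (i + 1))"
  "edge_length P (i + 1) = dist (vtx P (i + 1)) (vtx P (i + 2))"
  "edge_length P (i + 2) = dist (vtx P (i + 2)) (vtx P i)"
proof -
  have "Suc (i + 2) = i + 3" by simp
  then show "edge_length P (i + 2) = dist (vtx P (i + 2)) (vtx P i)"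
    by (simp only: edge_length_def vtx_add_3)
qed (simp_all add: edge_length_def)

lemma vtx_rotation_cases:
  obtains "vtx P i = P 0" "vtx P (i + 1) = P 1" "vtx P (i + 2) = P 2"
    | "vtx P i = P 1" "vtx P (i + 1) = P 2" "vtx P (i + 2) = P 0"
    | "vtx P i = P 2" "vtx P (i + 1) = P 0" "vtx P (i + 2) = P 1"
proof -
  have rot: "vtx P (i + k) = P ((i mod 3 + k) mod 3)" for k
    by (simp add: vtx_def mod_add_left_eq)
  consider "i mod 3 = 0" | "i mod 3 = 1" | "i mod 3 = 2" by arith
  then show ?thesis
  proof cases
    case 1
    then show ?thesis using rot[of 0] rot[of 1] rot[of 2] by (intro that(1)) (simp_all add: numeral_2_eq_2)
  next
    case 2
    then show ?thesis using rot[of 0] rot[of 1] rot[of 2] by (intro that(2)) (simp_all add: numeral_2_eq_2)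
  next
    case 3
    then show ?thesis using rot[of 0] rot[of 1] rot[of 2] by (intro that(3)) (simp_all add: numeral_2_eq_2)
  qed
qed

lemma Len_eq_edge_lengths: "Len P = edge_length P i + edge_length P (i + 1) + edge_length P (i + 2)"
  using edge_length_vtx[of P i]
  by (cases rule: vtx_rotation_cases[of P i]) (simp_all add: Len_def)

lemma edge_length_equilateral: "equilateral P \<Longrightarrow> edge_length P i = Len P / 3"
  using edge_length_vtx(1)[of P i]
  by (cases rule: vtx_rotation_cases[of P i]) (auto simp: Len_def equilateral_def)

lemma triangle_vtx:
  assumes "nondegenerate_triangle P"
  shows "triangle (vtx P i) (vtx P (i + 1)) (vtx P (i + 2))"
proof -
  have "{vtx P i, vtx P (i + 1), vtx P (i + 2)} = {P 0, P 1, P 2}"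
    by (cases rule: vtx_rotation_cases[of P i]) auto
  then show ?thesis
    using assms by (simp add: triangle_iff_not_collinear nondegenerate_triangle_def)
qed

lemma fold_segment_eq:
  "fold_segment P w i =
     external_bisector (vtx P i) (vtx P (i + 1)) (vtx P (i + 2))
     \<inter> {x. infdist x (affine hull {vtx P (i + 2), vtx P i}) < w / 2}"
  by (auto simp: fold_segment_def fold_line_def bisector_dir_def external_bisector_def)

lemma fold_segment_mod_3: "fold_segment P w (i mod 3) = fold_segment P w i"
  by (simp add: fold_segment_def fold_line_def bisector_dir_def vtx_def mod_simps)

lemma fold_segments_disjoint_iff:
  assumes "nondegenerate_triangle P"
  shows "fold_segment P w i \<inter> fold_segment P w (Suc i) = {} \<longleftrightarrow>
           w / 2 \<le> exradius (edge_length P (i + 1)) (edge_length P (i + 2)) (edge_length P i)"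
proof -
  have "Suc i + 1 = i + 2" "Suc i + 2 = i + 3" by simp_all
  then have "fold_segment P w (Suc i) =
      external_bisector (vtx P (i + 1)) (vtx P (i + 2)) (vtx P i)
      \<inter> {x. infdist x (affine hull {vtx P i, vtx P (i + 1)}) < w / 2}"
    by (simp only: fold_segment_eq vtx_add_3 Suc_eq_plus1)
  then show ?thesis
    using triangle.external_bisectors_meet_near_iff[OF triangle_vtx[OF assms], of i "w / 2"]
      edge_length_vtx[of P i]
    by (auto simp: fold_segment_eq not_less)
qed

lemma folded_ribbon_3stick_iff:
  "folded_ribbon_3stick P w F \<longleftrightarrow>
     nondegenerate_triangle P \<and> 0 < w \<and>
     (\<forall>i. w / 2 \<le> exradius (edge_length P (i + 1)) (edge_length P (i + 2)) (edge_length P i))"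
proof -
  let ?S = "fold_segment P w"
  have adjacent_iff:
    "(\<forall>i<3. \<forall>j<3. i \<noteq> j \<longrightarrow> ?S i \<inter> ?S j = {}) \<longleftrightarrow> (\<forall>i. ?S i \<inter> ?S (Suc i) = {})"
  proof
    assume "\<forall>i<3. \<forall>j<3. i \<noteq> j \<longrightarrow> ?S i \<inter> ?S j = {}"
    then have "?S (i mod 3) \<inter> ?S (Suc i mod 3) = {}" for i
      by (simp add: mod_Suc)
    then show "\<forall>i. ?S i \<inter> ?S (Suc i) = {}"
      by (simp add: fold_segment_mod_3)
  next
    assume adjacent: "\<forall>i. ?S i \<inter> ?S (Suc i) = {}"
    have "?S 3 = ?S 0" using fold_segment_mod_3[of P w 3] by simp
    moreover have "?S 2 \<inter> ?S 3 = {}" using adjacent[rule_format, of 2] by simp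
    ultimately have "?S 2 \<inter> ?S 0 = {}" by simp
    then show "\<forall>i<3. \<forall>j<3. i \<noteq> j \<longrightarrow> ?S i \<inter> ?S j = {}"
      using adjacent[rule_format, of 0] adjacent[rule_format, of 1]
      by (auto simp: less_Suc_eq numeral_3_eq_3 numeral_2_eq_2)
  qed
  show ?thesis
  proof (cases "nondegenerate_triangle P")
    case True
    then show ?thesis
      unfolding folded_ribbon_3stick_def adjacent_iff fold_segments_disjoint_iff[OF True] by simp
  qed (simp add: folded_ribbon_3stick_def)
qed

lemma shortest_edge:
  obtains i where "edge_length P i \<le> edge_length P (i + 1)" "edge_length P i \<le> edge_length P (i + 2)"
proof -
  have "edge_length P 3 = edge_length P 0" "edge_length P 4 = edge_length P 1"
    by (simp_all add: edge_length_def vtx_def numeral_2_eq_2)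
  then have "\<exists>i \<in> {0, 1, 2}.
      edge_length P i \<le> edge_length P (i + 1) \<and> edge_length P i \<le> edge_length P (i + 2)"
    by (simp add: eval_nat_numeral) linarith
  then show ?thesis using that by blast
qed

lemma width_le_perimeter:
  assumes "folded_ribbon_3stick P w F"
  shows "w \<le> Len P / sqrt 3"
proof -
  obtain i where shortest: "edge_length P i \<le> edge_length P (i + 1)" "edge_length P i \<le> edge_length P (i + 2)"
    by (rule shortest_edge)
  have "nondegenerate_triangle P"
    using assms by (simp add: folded_ribbon_3stick_iff)
  then have triangle_ineq: "edge_length P i < edge_length P (i + 1) + edge_length P (i + 2)"
    using triangle.strict_triangle(1)[OF triangle_vtx, of P i] edge_length_vtx[of P i] by simp
  have "w / 2 \<le> exradius (edge_length P (i + 1)) (edge_length P (i + 2)) (edge_length P i)"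
    using assms by (simp add: folded_ribbon_3stick_iff)
  also have "\<dots> \<le> (edge_length P (i + 1) + edge_length P (i + 2) + edge_length P i) / (2 * sqrt 3)"
    by (rule exradius_le_perimeter) (use shortest triangle_ineq in \<open>simp_all add: edge_length_def\<close>)
  also have "\<dots> = Len P / (2 * sqrt 3)"
    by (simp add: Len_eq_edge_lengths[of P i] add_ac)
  finally show ?thesis by (simp add: field_simps)
qed

lemma folded_ribbon_3stick_equilateral:
  assumes "equilateral P" and "0 < Len P"
  shows "folded_ribbon_3stick P (Len P / sqrt 3) F"
proof -
  have "dist (P 0) (P 1) = Len P / 3" "dist (P 1) (P 2) = Len P / 3" "dist (P 2) (P 0) = Len P / 3"
    using assms(1) by (auto simp: equilateral_def Len_def)
  then have "triangle (P 0) (P 1) (P 2)"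
    using assms(2) by unfold_locales simp_all
  moreover have "exradius (Len P / 3) (Len P / 3) (Len P / 3) = Len P / sqrt 3 / 2"
  proof -
    have "sqrt 3 * sqrt 3 = (3::real)" by simp
    then show ?thesis using assms(2) by (simp add: exradius_equilateral field_simps)
  qed
  ultimately show ?thesis
    using assms by (simp add: folded_ribbon_3stick_iff edge_length_equilateral
        nondegenerate_triangle_def triangle_iff_not_collinear)
qed

theorem theorem5p5:
  shows "(\<forall>P w F. folded_ribbon_3stick P w F \<and> \<bar>ribbon_Lk F\<bar> = 1 \<and> Len P = 1
            \<longrightarrow> w \<le> 1 / sqrt 3) \<and>
         (\<forall>P F. equilateral P \<and> Len P = 1 \<and> \<bar>ribbon_Lk F\<bar> = 1
            \<longrightarrow> folded_ribbon_3stick P (1 / sqrt 3) F)"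
  using width_le_perimeter folded_ribbon_3stick_equilateral by fastforce

end
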